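(* For every even integer $k\geq 2$ and every integer $d\geq 1$, there are infinitely many arithmetic progressions $\{a_1, a_2,\dots,a_k\}$ of positive integers of length $k$ and common difference $d$ such that $\sum_{i=1}^{k} \lambda(a_i)=0$, where $\lambda$ is the Liouville function.
   Context: The Liouville function is $\lambda(n)=(-1)^{\Omega(n)}$, where $\Omega(n)$ is the number of prime factors of $n$ counted with multiplicity. *)

theory Defs
  imports "HOL-Computational_Algebra.Primes"
begin

definition bigOmega :: "nat \<Rightarrow> nat" where
  "bigOmega n = size (prime_factorization n)"

definition liouville :: "nat \<Rightarrow> int" where
  "liouville n = (-1) ^ bigOmega n"

end

theory Submission
  imports Defs "HOL-Analysis.Harmonic_Numbers"
begin

text \<open>
  If only finitely many such progressions existed, then, since \<lambda>(dm + id) = \<lambda>(d) \<lambda>(m + i),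
  the block sums T(m) = \<lambda>(m) + \<dots> + \<lambda>(m + k - 1) would be nonzero for all large m. Being
  even and changing by at most 2 from m to m + 1, they eventually keep one sign \<epsilon>, so the
  partial sums L(y) = \<lambda>(1) + \<dots> + \<lambda>(y) satisfy \<epsilon> k L(y) \<ge> y - C. Now the sum of
  L(\<lfloor>x/q\<rfloor>) over q \<le> x equals the sum of the divisor sums D(j) = \<Sum>{\<lambda>(n) | n divides j}
  over j \<le> x, and each D(j) is 0 or 1. Hence the sum of \<lfloor>x/q\<rfloor> over q \<le> x would be O(x),
  whereas it grows like x log x.
\<close>

lemma liouville_mult:
  "a > 0 \<Longrightarrow> b > 0 \<Longrightarrow> liouville (a * b) = liouville a * liouville b"
  unfolding liouville_def bigOmega_def by (simp add: prime_factorization_mult power_add)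

lemma liouville_prime_power: "prime p \<Longrightarrow> liouville (p ^ i) = (-1) ^ i"
  unfolding liouville_def bigOmega_def by (simp add: prime_factorization_prime_power)

lemma abs_liouville [simp]: "\<bar>liouville n\<bar> = 1"
  unfolding liouville_def by simp

lemma odd_liouville: "odd (liouville n)"
  unfolding liouville_def by simp

lemma even_liouville_block_sum: "even (\<Sum>i<k. liouville (m + i)) \<longleftrightarrow> even k"
  by (simp add: even_sum_iff odd_liouville)

lemma liouville_block_sum_Suc:
  "\<bar>(\<Sum>i<k. liouville (Suc m + i)) - (\<Sum>i<k. liouville (m + i))\<bar> \<le> 2"
proof -
  have "(\<Sum>i<k. liouville (Suc m + i)) - (\<Sum>i<k. liouville (m + i)) = liouville (m + k) - liouville m"
    by (induction k) simp_all
  then show ?thesis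
    using abs_triangle_ineq4[of "liouville (m + k)" "liouville m"] by simp
qed

lemma liouville_progression_sum:
  assumes "d > 0" "m > 0"
  shows "(\<Sum>i<k. liouville (d * m + i * d)) = liouville d * (\<Sum>i<k. liouville (m + i))"
proof -
  have "liouville (d * m + i * d) = liouville d * liouville (m + i)" for i
    using liouville_mult[of d "m + i"] assms by (simp add: algebra_simps)
  then show ?thesis
    by (simp add: sum_distrib_left)
qed

lemma divisors_prime_power_mult:
  fixes p r :: nat
  assumes "prime p" "\<not> p dvd r"
  shows "bij_betw (\<lambda>(i, s). p ^ i * s) ({..e} \<times> {s. s dvd r}) {n. n dvd p ^ e * r}"
proof (rule bij_betw_imageI)
  show "inj_on (\<lambda>(i, s). p ^ i * s) ({..e} \<times> {s. s dvd r})"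
  proof (rule inj_onI, clarsimp)
    fix i s j t
    assume "s dvd r" "t dvd r" and eq: "p ^ i * s = p ^ j * t"
    then have "\<not> p dvd s" "\<not> p dvd t"
      using assms(2) dvd_trans by blast+
    moreover have "p \<noteq> 0"
      using assms(1) by auto
    ultimately have "i = j"
      using eq multiplicity_decomposeI[of "p ^ i * s" p i s] multiplicity_decomposeI[of "p ^ i * s" p j t]
      by simp
    with eq assms(1) show "i = j \<and> s = t"
      by (simp add: prime_gt_0_nat)
  qed
  show "(\<lambda>(i, s). p ^ i * s) ` ({..e} \<times> {s. s dvd r}) = {n. n dvd p ^ e * r}"
  proof (intro equalityI subsetI)
    fix n assume "n \<in> {n. n dvd p ^ e * r}"
    then obtain x y where "n = x * y" "x dvd p ^ e" "y dvd r"
      by (auto elim: dvd_productE)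
    moreover obtain i where "i \<le> e" "x = p ^ i"
      using divides_primepow_nat[OF assms(1)] \<open>x dvd p ^ e\<close> by auto
    ultimately show "n \<in> (\<lambda>(i, s). p ^ i * s) ` ({..e} \<times> {s. s dvd r})"
      by auto
  qed (auto simp: le_imp_power_dvd mult_dvd_mono)
qed

definition liouville_divisor_sum :: "nat \<Rightarrow> int" where
  "liouville_divisor_sum j = (\<Sum>n | n dvd j. liouville n)"

lemma liouville_divisor_sum_prime_power_mult:
  fixes p r :: nat
  assumes "prime p" "\<not> p dvd r" "r > 0"
  shows "liouville_divisor_sum (p ^ e * r) = (\<Sum>i\<le>e. (-1) ^ i) * liouville_divisor_sum r"
proof -
  have "liouville_divisor_sum (p ^ e * r) = (\<Sum>(i, s)\<in>{..e} \<times> {s. s dvd r}. liouville (p ^ i * s))"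
    unfolding liouville_divisor_sum_def
    using sum.reindex_bij_betw[OF divisors_prime_power_mult[OF assms(1,2)], of liouville]
    by (simp add: case_prod_unfold)
  also have "\<dots> = (\<Sum>i\<le>e. \<Sum>s | s dvd r. (-1) ^ i * liouville s)"
    unfolding sum.cartesian_product[symmetric]
    using assms(1,3) by (intro sum.cong refl)
      (auto simp: liouville_mult liouville_prime_power prime_gt_0_nat intro!: Nat.gr0I)
  also have "\<dots> = (\<Sum>i\<le>e. (-1) ^ i) * liouville_divisor_sum r"
    by (simp add: liouville_divisor_sum_def sum_distrib_left sum_distrib_right sum.swap[of _ "{..e}"])
  finally show ?thesis .
qed

lemma sum_alternating_signs: "(\<Sum>i\<le>e. (-1::int) ^ i) = (if even e then 1 else 0)"
  by (induction e) auto

lemma liouville_divisor_sum_0_or_1: "j > 0 \<Longrightarrow> liouville_divisor_sum j \<in> {0, 1}"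
proof (induction j rule: less_induct)
  case (less j)
  show ?case
  proof (cases "j = 1")
    case True
    then have "{n. n dvd j} = {1}" by auto
    then show ?thesis
      by (simp add: liouville_divisor_sum_def liouville_def bigOmega_def)
  next
    case False
    then obtain p where p: "prime p" "p dvd j"
      using prime_factor_nat by blast
    obtain r where r: "j = p ^ multiplicity p j * r" "\<not> p dvd r"
      using less.prems p(1) by (metis multiplicity_decompose' not_prime_unit not_gr0)
    then have "r > 0" "multiplicity p j > 0"
      using less.prems p(2) by (auto intro!: Nat.gr0I)
    moreover have "p ^ multiplicity p j > 1"
      using one_less_power prime_gt_1_nat[OF p(1)] \<open>multiplicity p j > 0\<close> by blast
    ultimately have "r < j"
      using r(1) by (metis One_nat_def n_less_m_mult_n)
    moreover have "liouville_divisor_sum j =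
        (\<Sum>i\<le>multiplicity p j. (-1) ^ i) * liouville_divisor_sum r"
      using liouville_divisor_sum_prime_power_mult[OF p(1) r(2) \<open>r > 0\<close>] r(1) by metis
    ultimately show ?thesis
      using less.IH[OF _ \<open>r > 0\<close>] by (auto simp: sum_alternating_signs)
  qed
qed

definition liouville_partial_sum :: "nat \<Rightarrow> int" where
  "liouville_partial_sum y = (\<Sum>n = 1..y. liouville n)"

lemma liouville_partial_sum_Suc_div:
  assumes "q > 0"
  shows "liouville_partial_sum (Suc x div q) =
    liouville_partial_sum (x div q) + (if q dvd Suc x then liouville (Suc x div q) else 0)"
proof (cases "q dvd Suc x")
  case True
  then have "Suc x div q = Suc (x div q)"
    using div_Suc[of x q] by (simp add: dvd_eq_mod_eq_0)
  with True show ?thesis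
    by (simp add: liouville_partial_sum_def)
next
  case False
  then have "Suc x div q = x div q"
    using div_Suc[of x q] by (simp add: dvd_eq_mod_eq_0)
  with False show ?thesis by simp
qed

lemma liouville_divisor_sum_conv_cofactors:
  assumes "j > 0"
  shows "liouville_divisor_sum j = (\<Sum>q | q dvd j. liouville (j div q))"
  unfolding liouville_divisor_sum_def
  by (rule sum.reindex_bij_witness[where i="\<lambda>q. j div q" and j="\<lambda>q. j div q"])
    (use assms in \<open>auto elim!: dvdE\<close>)

lemma sum_liouville_partial_sum_div:
  "(\<Sum>q = 1..x. liouville_partial_sum (x div q)) = (\<Sum>j = 1..x. liouville_divisor_sum j)"
proof (induction x)
  case 0
  then show ?case by simp
next
  case (Suc x)
  have divisors: "{q \<in> {1..Suc x}. q dvd Suc x} = {q. q dvd Suc x}"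
    by (auto dest: dvd_imp_le intro: Nat.gr0I simp: Suc_le_eq)
  have "(\<Sum>q = 1..Suc x. liouville_partial_sum (Suc x div q)) =
      (\<Sum>q = 1..Suc x. liouville_partial_sum (x div q))
      + (\<Sum>q \<in> {1..Suc x}. if q dvd Suc x then liouville (Suc x div q) else 0)"
    by (simp add: liouville_partial_sum_Suc_div sum.distrib)
  also have "(\<Sum>q = 1..Suc x. liouville_partial_sum (x div q)) =
      (\<Sum>q = 1..x. liouville_partial_sum (x div q))"
    by (simp add: liouville_partial_sum_def)
  also have "(\<Sum>q \<in> {1..Suc x}. if q dvd Suc x then liouville (Suc x div q) else 0) =
      liouville_divisor_sum (Suc x)"
    unfolding sum.inter_filter[OF finite_atLeastAtMost, symmetric] divisors
    by (simp add: liouville_divisor_sum_conv_cofactors)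
  finally show ?case
    using Suc by simp
qed

lemma sum_liouville_divisor_sum_bounds:
  "0 \<le> (\<Sum>j = 1..x. liouville_divisor_sum j) \<and> (\<Sum>j = 1..x. liouville_divisor_sum j) \<le> int x"
proof -
  have "0 \<le> liouville_divisor_sum j \<and> liouville_divisor_sum j \<le> 1" if "j \<in> {1..x}" for j
    using liouville_divisor_sum_0_or_1[of j] that by auto
  then show ?thesis
    using sum_mono[of "{1..x}" liouville_divisor_sum "\<lambda>_. 1"] sum_nonneg[of "{1..x}" liouville_divisor_sum]
    by auto
qed

lemma sgn_eventually_constant:
  fixes T :: "nat \<Rightarrow> int"
  assumes nonzero_even: "\<And>m. m \<ge> N \<Longrightarrow> T m \<noteq> 0 \<and> even (T m)"
    and steps: "\<And>m. \<bar>T (Suc m) - T m\<bar> \<le> 2"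
    and "m \<ge> N"
  shows "sgn (T m) = sgn (T N)"
  using \<open>m \<ge> N\<close>
proof (induction m rule: dec_induct)
  case (step m)
  have "T m \<noteq> 1" "T m \<noteq> -1"
    using nonzero_even[OF step.hyps(1)] by auto
  then have "\<bar>T m\<bar> \<ge> 2"
    using nonzero_even[OF step.hyps(1)] by auto
  moreover have "T (Suc m) \<noteq> 0"
    using nonzero_even step.hyps(1) by simp
  ultimately have "sgn (T (Suc m)) = sgn (T m)"
    using steps[of m] by (auto simp: sgn_if)
  with step.IH show ?case
    by simp
qed simp

lemma partial_sums_linear_growth:
  fixes g :: "nat \<Rightarrow> int"
  assumes "k > 0" and bounded: "\<And>n. \<bar>g n\<bar> \<le> 1"
    and blocks: "\<And>m. m \<ge> N \<Longrightarrow> 1 \<le> (\<Sum>i<k. g (m + i))"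
  shows "int y - (int k + 1) * int (N + k) \<le> int k * (\<Sum>n = 1..y. g n)"
proof (induction y rule: less_induct)
  case (less y)
  show ?case
  proof (cases "y < N + k")
    case True
    have "\<bar>\<Sum>n = 1..y. g n\<bar> \<le> (\<Sum>n = 1..y. \<bar>g n\<bar>)"
      by (rule sum_abs)
    also have "\<dots> \<le> (\<Sum>n = 1..y. 1)"
      by (rule sum_mono) (rule bounded)
    finally have "\<bar>\<Sum>n = 1..y. g n\<bar> \<le> int y"
      by simp
    then have "- int k * int y \<le> int k * (\<Sum>n = 1..y. g n)"
      using mult_left_mono[of "- (\<Sum>n = 1..y. g n)" "int y" "int k"] by (simp add: abs_le_iff)
    moreover have "(int k + 1) * int y \<le> (int k + 1) * int (N + k)"
      using True by simp
    ultimately show ?thesis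
      by (simp add: algebra_simps)
  next
    case False
    define z where "z = y - k"
    have z: "y = z + k" "z \<ge> N"
      using False unfolding z_def by simp_all
    have split: "(\<Sum>n = 1..z + k. g n) = (\<Sum>n = 1..z. g n) + (\<Sum>i<k. g (Suc z + i))"
      by (induction k) simp_all
    have "int z - (int k + 1) * int (N + k) \<le> int k * (\<Sum>n = 1..z. g n)"
      using less.IH \<open>k > 0\<close> z(1) by simp
    moreover have "int k \<le> int k * (\<Sum>i<k. g (Suc z + i))"
      using blocks[of "Suc z"] z(2) mult_left_mono[of 1 _ "int k"] by simp
    ultimately show ?thesis
      unfolding z(1) split by (simp add: algebra_simps)
  qed
qed

lemma sum_div_not_linearly_bounded:
  fixes M :: nat
  shows "\<exists>x. M * x < (\<Sum>q = 1..x. x div q)"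
proof (rule ccontr)
  assume "\<nexists>x. M * x < (\<Sum>q = 1..x. x div q)"
  then have bounded: "(\<Sum>q = 1..x. x div q) \<le> M * x" for x
    using not_less by blast
  have "harm x \<le> real M + 1" if "x \<ge> 1" for x :: nat
  proof -
    have "real x * harm x = (\<Sum>q = 1..x. real x / real q)"
      by (simp add: harm_def sum_distrib_left divide_inverse)
    also have "\<dots> \<le> (\<Sum>q = 1..x. real (x div q) + 1)"
    proof (rule sum_mono)
      fix q
      have "real x / real q < real_of_int \<lfloor>real x / real q\<rfloor> + 1"
        by (rule real_of_int_floor_add_one_gt)
      then show "real x / real q \<le> real (x div q) + 1"
        by (simp add: floor_divide_of_nat_eq)
    qed
    also have "\<dots> = real (\<Sum>q = 1..x. x div q) + real x"
      by (simp add: sum.distrib)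
    also have "\<dots> \<le> real (M * x) + real x"
      using bounded[of x] by linarith
    finally have "real x * harm x \<le> real x * (real M + 1)"
      by (simp add: algebra_simps)
    then show ?thesis
      using that by simp
  qed
  moreover obtain x where "x \<ge> 1" "harm x > real M + 1"
  proof -
    obtain x0 where "\<forall>x\<ge>x0. harm x > real M + 1"
      using harm_at_top unfolding filterlim_at_top_dense eventually_sequentially by blast
    then show ?thesis
      using that[of "x0 + 1"] by simp
  qed
  ultimately show False
    by fastforce
qed

lemma liouville_block_sums_not_eventually_positive:
  fixes e :: int
  assumes "k > 0" "e \<in> {1, -1}"
  shows "\<not> (\<forall>m\<ge>N. 1 \<le> e * (\<Sum>i<k. liouville (m + i)))"
proof
  assume blocks: "\<forall>m\<ge>N. 1 \<le> e * (\<Sum>i<k. liouville (m + i))"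
  define C where "C = (int k + 1) * int (N + k)"
  have growth: "int y - C \<le> int k * (e * liouville_partial_sum y)" for y
    using partial_sums_linear_growth[of k "\<lambda>n. e * liouville n" N y] assms blocks
    by (auto simp: C_def liouville_partial_sum_def sum_distrib_left abs_mult)
  obtain x where x: "(k + nat C) * x < (\<Sum>q = 1..x. x div q)"
    using sum_div_not_linearly_bounded by blast
  have "e * (\<Sum>j = 1..x. liouville_divisor_sum j) \<le> int x"
    using assms(2) sum_liouville_divisor_sum_bounds[of x] by auto
  then have "int k * (e * (\<Sum>j = 1..x. liouville_divisor_sum j)) \<le> int k * int x"
    by (rule mult_left_mono) simp
  moreover have "int (\<Sum>q = 1..x. x div q) - C * int x = (\<Sum>q = 1..x. int (x div q) - C)"
    by (simp add: sum_subtractf)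
  moreover have "\<dots> \<le> (\<Sum>q = 1..x. int k * (e * liouville_partial_sum (x div q)))"
    by (rule sum_mono) (rule growth)
  moreover have "\<dots> = int k * (e * (\<Sum>j = 1..x. liouville_divisor_sum j))"
    by (simp only: sum_distrib_left[symmetric] sum_liouville_partial_sum_div)
  moreover have "int ((k + nat C) * x) = int k * int x + C * int x"
    by (simp add: C_def algebra_simps)
  ultimately show False
    using x by linarith
qed

lemma infinite_zero_liouville_block_sums:
  assumes "even k" "k > 0"
  shows "infinite {m. (\<Sum>i<k. liouville (m + i)) = 0}"
  unfolding infinite_nat_iff_unbounded_le
proof (intro allI, rule ccontr)
  fix N
  define T where "T m = (\<Sum>i<k. liouville (m + i))" for m
  assume "\<nexists>m. N \<le> m \<and> m \<in> {m. (\<Sum>i<k. liouville (m + i)) = 0}"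
  then have nonzero_even: "T m \<noteq> 0 \<and> even (T m)" if "m \<ge> N" for m
    using that assms(1) even_liouville_block_sum by (auto simp: T_def)
  have "1 \<le> sgn (T N) * T m" if "m \<ge> N" for m
  proof -
    have "sgn (T N) * T m = \<bar>T m\<bar>"
      using sgn_eventually_constant[of N T m] nonzero_even liouville_block_sum_Suc that
      by (simp add: T_def sgn_mult_abs abs_sgn)
    then show ?thesis
      using nonzero_even[OF that] by linarith
  qed
  moreover have "sgn (T N) \<in> {1, -1}"
    using nonzero_even[of N] by (simp add: sgn_if)
  ultimately show False
    using liouville_block_sums_not_eventually_positive[OF assms(2)] by (auto simp: T_def)
qed

theorem corollary5p2:
  fixes k d :: nat
  assumes "even k" and "k \<ge> 2" and "d \<ge> 1"
  shows "infinite {a :: nat. a \<ge> 1 \<and> (\<Sum>i<k. liouville (a + i * d)) = 0}"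
proof -
  let ?Z = "{m. (\<Sum>i<k. liouville (m + i)) = 0} - {0}"
  have "infinite ?Z"
    using infinite_zero_liouville_block_sums assms(1,2) by simp
  then have "infinite ((\<lambda>m. d * m) ` ?Z)"
    using assms(3) by (auto dest: finite_imageD simp: inj_on_def)
  moreover have "(\<lambda>m. d * m) ` ?Z \<subseteq> {a. a \<ge> 1 \<and> (\<Sum>i<k. liouville (a + i * d)) = 0}"
    using assms(3) liouville_progression_sum by (auto simp: Suc_le_eq)
  ultimately show ?thesis
    by (rule infinite_super[rotated])
qed

end
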